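(* Let $G$ be a connected planar trivalent graph with a perfect matching $M$. If $G$ contains a bridge, then $\langle G:M\rangle_2(1)=0$ and $|G:M|_2=0$.
   Context: Graphs are finite and may have multiple edges; trivalent means every vertex has degree $3$. A bridge is an edge whose removal disconnects the graph. $|G:M|_2$ denotes the number of $2$-factors (spanning subgraphs in which every vertex has degree $2$) of $G$ containing every edge of $M$. The $2$-factor polynomial $\langle G:M\rangle_2(z)\in\mathbb{Z}[z,z^{-1}]$ is defined as follows. Embed $G$ in the $2$-sphere. For a matching edge $e=uv$, let $\alpha,\beta$ be the other two edge-ends at $u$ and $\gamma,\delta$ the other two at $v$, labelled so that in a small disk around $e$ they appear in cyclic order $\alpha,\beta,\delta,\gamma$. The $0$-resolution at $e$ deletes $e,u,v$ and joins $\alpha$ to $\gamma$ and $\beta$ to $\delta$ by disjoint arcs; the $1$-resolution joins $\alpha$ to $\delta$ and $\beta$ to $\gamma$ by two arcs crossing once. For a state $s:M\to\{0,1\}$, resolving every matching edge accordingly yields $c(s)$ immersed closed curves, and $\langle G:M\rangle_2(z)=\sum_s(-z)^{|s|}(z+z^{-1})^{c(s)}$, where $|s|$ is the number of edges assigned $1$. This is independent of the chosen embedding. *)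

theory Defs
  imports Complex_Main
begin

text \<open>A finite trivalent multigraph embedded in an oriented closed surface is encoded
as a combinatorial map (rotation system) on a finite set D of darts (half-edges):
alpha is the fixed-point-free involution pairing the two darts of an edge, sigma is the
rotation permutation whose orbits (all of size 3) are the vertices, and the faces are
the orbits of sigma o alpha.\<close>

definition trivalent_map :: "'d set \<Rightarrow> ('d \<Rightarrow> 'd) \<Rightarrow> ('d \<Rightarrow> 'd) \<Rightarrow> bool" where
  "trivalent_map D \<alpha> \<sigma> \<longleftrightarrow> finite D \<and> D \<noteq> {} \<and>
     (\<forall>d\<in>D. \<alpha> d \<in> D \<and> \<alpha> d \<noteq> d \<and> \<alpha> (\<alpha> d) = d) \<and>
     (\<forall>d\<in>D. \<sigma> d \<in> D \<and> \<sigma> d \<noteq> d \<and> \<sigma> (\<sigma> d) \<noteq> d \<and> \<sigma> (\<sigma> (\<sigma> d)) = d)"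

definition vert :: "('d \<Rightarrow> 'd) \<Rightarrow> 'd \<Rightarrow> 'd set" where
  "vert \<sigma> d = {d, \<sigma> d, \<sigma> (\<sigma> d)}"

definition orbits :: "'d set \<Rightarrow> ('d \<Rightarrow> 'd) \<Rightarrow> 'd set set" where
  "orbits D f = D // ({(x, f x) | x. x \<in> D}\<^sup>*)"

text \<open>connectivity of the graph whose edges are given by the set E of darts
(darts of a common vertex are always joined)\<close>
definition dart_conn :: "'d set \<Rightarrow> ('d \<Rightarrow> 'd) \<Rightarrow> ('d \<Rightarrow> 'd) \<Rightarrow> 'd set \<Rightarrow> ('d \<times> 'd) set" where
  "dart_conn D \<alpha> \<sigma> E =
     (let R = {(x, \<sigma> x) | x. x \<in> D} \<union> {(x, \<alpha> x) | x. x \<in> E} in (R \<union> R\<inverse>)\<^sup>*)"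

definition connected_map :: "'d set \<Rightarrow> ('d \<Rightarrow> 'd) \<Rightarrow> ('d \<Rightarrow> 'd) \<Rightarrow> bool" where
  "connected_map D \<alpha> \<sigma> \<longleftrightarrow> (\<forall>x\<in>D. \<forall>y\<in>D. (x, y) \<in> dart_conn D \<alpha> \<sigma> D)"

text \<open>embedding in the 2-sphere: Euler characteristic V - E + F = 2 (connected map)\<close>
definition planar_map :: "'d set \<Rightarrow> ('d \<Rightarrow> 'd) \<Rightarrow> ('d \<Rightarrow> 'd) \<Rightarrow> bool" where
  "planar_map D \<alpha> \<sigma> \<longleftrightarrow>
     int (card (orbits D \<sigma>)) - int (card (orbits D \<alpha>)) + int (card (orbits D (\<sigma> \<circ> \<alpha>))) = 2"

definition has_bridge :: "'d set \<Rightarrow> ('d \<Rightarrow> 'd) \<Rightarrow> ('d \<Rightarrow> 'd) \<Rightarrow> bool" where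
  "has_bridge D \<alpha> \<sigma> \<longleftrightarrow> (\<exists>d\<in>D. \<exists>x\<in>D. \<exists>y\<in>D.
      (x, y) \<notin> dart_conn D \<alpha> \<sigma> (D - {d, \<alpha> d}))"

definition perfect_matching :: "'d set \<Rightarrow> ('d \<Rightarrow> 'd) \<Rightarrow> ('d \<Rightarrow> 'd) \<Rightarrow> 'd set \<Rightarrow> bool" where
  "perfect_matching D \<alpha> \<sigma> Md \<longleftrightarrow> Md \<subseteq> D \<and> (\<forall>d\<in>Md. \<alpha> d \<in> Md) \<and>
     (\<forall>d\<in>D. card (vert \<sigma> d \<inter> Md) = 1)"

text \<open>|G:M|_2 : number of 2-factors (edge sets, i.e. alpha-closed dart sets, with every
vertex of degree 2) containing all edges of M\<close>
definition two_factor_count :: "'d set \<Rightarrow> ('d \<Rightarrow> 'd) \<Rightarrow> ('d \<Rightarrow> 'd) \<Rightarrow> 'd set \<Rightarrow> nat" where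
  "two_factor_count D \<alpha> \<sigma> Md = card {F. F \<subseteq> D \<and> (\<forall>x\<in>F. \<alpha> x \<in> F) \<and> Md \<subseteq> F \<and>
      (\<forall>d\<in>D. card (vert \<sigma> d \<inter> F) = 2)}"

definition match_edges :: "('d \<Rightarrow> 'd) \<Rightarrow> 'd set \<Rightarrow> 'd set set" where
  "match_edges \<alpha> Md = {{d, \<alpha> d} | d. d \<in> Md}"

definition mdart :: "('d \<Rightarrow> 'd) \<Rightarrow> 'd set \<Rightarrow> 'd \<Rightarrow> 'd" where
  "mdart \<sigma> Md x = (THE m. m \<in> Md \<and> m \<in> vert \<sigma> x)"

text \<open>Resolution at matching edge e = {m, alpha m} (m at u, alpha m at v): with
a = sigma m, b = sigma^2 m, d = sigma (alpha m), c = sigma^2 (alpha m), these appear in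
cyclic order a, b, d, c around e. The 0-resolution joins a-c and b-d, the 1-resolution
(for edges in S) joins a-d and b-c. res_partner gives the end joined to a non-matching
dart x.\<close>
definition res_partner :: "('d \<Rightarrow> 'd) \<Rightarrow> ('d \<Rightarrow> 'd) \<Rightarrow> 'd set \<Rightarrow> 'd set set \<Rightarrow> 'd \<Rightarrow> 'd" where
  "res_partner \<alpha> \<sigma> Md S x =
     (let m = mdart \<sigma> Md x in
      if x = \<sigma> m then (if {m, \<alpha> m} \<in> S then \<sigma> (\<alpha> m) else \<sigma> (\<sigma> (\<alpha> m)))
      else (if {m, \<alpha> m} \<in> S then \<sigma> (\<sigma> (\<alpha> m)) else \<sigma> (\<alpha> m)))"

text \<open>number c(s) of closed curves in the resolution where the edges in S get 1:
components of the non-matching darts linked along non-matching edges and along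
resolution arcs\<close>
definition num_curves :: "'d set \<Rightarrow> ('d \<Rightarrow> 'd) \<Rightarrow> ('d \<Rightarrow> 'd) \<Rightarrow> 'd set \<Rightarrow> 'd set set \<Rightarrow> nat" where
  "num_curves D \<alpha> \<sigma> Md S =
     (let N = D - Md;
          R = {(x, \<alpha> x) | x. x \<in> N} \<union> {(x, res_partner \<alpha> \<sigma> Md S x) | x. x \<in> N}
      in card (N // ((R \<union> R\<inverse>)\<^sup>*)))"

definition two_factor_poly :: "'d set \<Rightarrow> ('d \<Rightarrow> 'd) \<Rightarrow> ('d \<Rightarrow> 'd) \<Rightarrow> 'd set \<Rightarrow> real \<Rightarrow> real" where
  "two_factor_poly D \<alpha> \<sigma> Md z =
     (\<Sum>S\<in>Pow (match_edges \<alpha> Md). (- z) ^ card S * (z + 1 / z) ^ num_curves D \<alpha> \<sigma> Md S)"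

end

theory Submission
  imports Defs
begin

text \<open>Let \<open>{m, \<alpha> m}\<close> be a bridge and \<open>A\<close> the set of darts reachable from \<open>m\<close> without
crossing it. Every other edge has both or none of its darts in \<open>A\<close>, so \<open>|A|\<close> is odd, whereas
any edge set with two darts at every vertex meets the union of vertices \<open>A\<close> evenly. Applied to
the non-matching darts (and the matching darts, which would pair up if \<open>m\<close> were not matched)
this puts the bridge into \<open>M\<close>; applied to a 2-factor containing \<open>M\<close> it is a contradiction,
so \<open>|G:M|\<^sub>2 = 0\<close>.

The same parity count, applied to the curve through \<open>\<sigma> m\<close> after cutting the resolution arcs at
both ends of the bridge, shows that the two non-matching darts at each end of the bridge lie on
one curve in every state. Hence the state of the bridge does not affect \<open>c(s)\<close>, and toggling
it pairs off the terms of \<open>\<langle>G:M\<rangle>\<^sub>2(1)\<close> with opposite signs.\<close>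

lemma even_card_involution:
  assumes "finite X" and "\<forall>x\<in>X. f x \<in> X \<and> f x \<noteq> x \<and> f (f x) = x"
  shows "even (card X)"
  using assms
proof (induction "card X" arbitrary: X rule: less_induct)
  case less
  show ?case
  proof (cases "X = {}")
    case False
    then obtain x where x: "x \<in> X" by blast
    have pair: "{x, f x} \<subseteq> X" "card {x, f x} = 2" using less.prems(2) x by auto
    let ?Y = "X - {x, f x}"
    have card_Y: "card ?Y = card X - 2"
      using pair less.prems(1) by (simp add: card_Diff_subset)
    have "card X \<ge> 2" using pair card_mono[OF less.prems(1)] by metis
    moreover have "even (card ?Y)"
    proof (rule less.hyps)
      show "\<forall>y\<in>?Y. f y \<in> ?Y \<and> f y \<noteq> y \<and> f (f y) = y"
        using less.prems(2) x by (metis Diff_iff insertCI insertE singletonD)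
    qed (use card_Y \<open>card X \<ge> 2\<close> less.prems(1) in auto)
    ultimately show ?thesis using card_Y by simp
  qed simp
qed

lemma odd_card_involution_but_one:
  assumes "finite X" and "a \<in> X" and "\<forall>x\<in>X - {a}. f x \<in> X - {a} \<and> f x \<noteq> x \<and> f (f x) = x"
  shows "odd (card X)"
proof -
  have "even (card (X - {a}))" using assms(1,3) by (intro even_card_involution) auto
  moreover have "card X = Suc (card (X - {a}))" using card_Suc_Diff1[OF assms(1,2)] by simp
  ultimately show ?thesis by simp
qed

lemma sym_closure_sym:
  "(x, y) \<in> (R \<union> R\<inverse>)\<^sup>* \<Longrightarrow> (y, x) \<in> (R \<union> R\<inverse>)\<^sup>*"
  by (meson sym_Un_converse sym_rtrancl symD)

lemma sym_closure_subset:
  assumes "R \<subseteq> (S \<union> S\<inverse>)\<^sup>*"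
  shows "(R \<union> R\<inverse>)\<^sup>* \<subseteq> (S \<union> S\<inverse>)\<^sup>*"
proof (rule rtrancl_subset_rtrancl)
  show "R \<union> R\<inverse> \<subseteq> (S \<union> S\<inverse>)\<^sup>*"
    using assms by (auto intro: sym_closure_sym)
qed

lemma sum_Pow_eq_0_if_flip_negates:
  fixes g :: "'a set \<Rightarrow> 'b::ab_group_add"
  assumes "finite A" and "e \<in> A" and flip: "\<And>S. S \<subseteq> A - {e} \<Longrightarrow> g (insert e S) = - g S"
  shows "(\<Sum>S\<in>Pow A. g S) = 0"
proof -
  let ?B = "A - {e}"
  have A: "A = insert e ?B" using assms(2) by blast
  have inj: "inj_on (insert e) (Pow ?B)"
    by (rule inj_onI) (metis Diff_insert_absorb PowD insert_subset subset_Diff_insert)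
  have disj: "Pow ?B \<inter> insert e ` Pow ?B = {}" by auto
  have "(\<Sum>S\<in>Pow A. g S) = (\<Sum>S\<in>Pow ?B. g S) + (\<Sum>S\<in>insert e ` Pow ?B. g S)"
    by (subst A, unfold Pow_insert) (rule sum.union_disjoint, use assms(1) disj in auto)
  also have "(\<Sum>S\<in>insert e ` Pow ?B. g S) = (\<Sum>S\<in>Pow ?B. - g S)"
    using flip by (simp add: sum.reindex[OF inj])
  finally show ?thesis by (simp add: sum_negf)
qed

lemma dart_conn_refl: "(x, x) \<in> dart_conn D \<alpha> \<sigma> E"
  unfolding dart_conn_def Let_def by simp

lemma dart_conn_sym: "(x, y) \<in> dart_conn D \<alpha> \<sigma> E \<Longrightarrow> (y, x) \<in> dart_conn D \<alpha> \<sigma> E"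
  unfolding dart_conn_def Let_def by (rule sym_closure_sym)

lemma dart_conn_trans:
  "(x, y) \<in> dart_conn D \<alpha> \<sigma> E \<Longrightarrow> (y, z) \<in> dart_conn D \<alpha> \<sigma> E \<Longrightarrow> (x, z) \<in> dart_conn D \<alpha> \<sigma> E"
  unfolding dart_conn_def Let_def by (rule rtrancl_trans)

lemma dart_conn_sigma: "x \<in> D \<Longrightarrow> (x, \<sigma> x) \<in> dart_conn D \<alpha> \<sigma> E"
  unfolding dart_conn_def Let_def by (rule r_into_rtrancl) blast

lemma dart_conn_alpha: "x \<in> E \<Longrightarrow> (x, \<alpha> x) \<in> dart_conn D \<alpha> \<sigma> E"
  unfolding dart_conn_def Let_def by (rule r_into_rtrancl) blast

lemma dart_conn_subset:
  "R \<subseteq> dart_conn D \<alpha> \<sigma> E \<Longrightarrow> (R \<union> R\<inverse>)\<^sup>* \<subseteq> dart_conn D \<alpha> \<sigma> E"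
  unfolding dart_conn_def Let_def by (rule sym_closure_subset)

lemma in_vert [simp]: "d \<in> vert \<sigma> d" "\<sigma> d \<in> vert \<sigma> d" "\<sigma> (\<sigma> d) \<in> vert \<sigma> d"
  unfolding vert_def by simp_all

locale trivalent_matching =
  fixes D :: "'d set" and \<alpha> \<sigma> :: "'d \<Rightarrow> 'd" and Md :: "'d set"
  assumes trivalent: "trivalent_map D \<alpha> \<sigma>" and matching: "perfect_matching D \<alpha> \<sigma> Md"
begin

lemma finite_darts: "finite D"
  using trivalent unfolding trivalent_map_def by auto

lemma alpha:
  assumes "d \<in> D"
  shows alpha_in: "\<alpha> d \<in> D" and alpha_neq: "\<alpha> d \<noteq> d" and alpha_alpha: "\<alpha> (\<alpha> d) = d"
  using trivalent assms unfolding trivalent_map_def by auto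

lemma sigma:
  assumes "d \<in> D"
  shows sigma_in: "\<sigma> d \<in> D" and sigma_neq: "\<sigma> d \<noteq> d" and sigma2_neq: "\<sigma> (\<sigma> d) \<noteq> d"
    and sigma3: "\<sigma> (\<sigma> (\<sigma> d)) = d"
  using trivalent assms unfolding trivalent_map_def by auto

lemma sigma2_neq_sigma: "d \<in> D \<Longrightarrow> \<sigma> (\<sigma> d) \<noteq> \<sigma> d"
  using sigma_neq sigma_in by blast

lemma matching_subset: "Md \<subseteq> D"
  and matching_alpha: "m \<in> Md \<Longrightarrow> \<alpha> m \<in> Md"
  and card_vert_matching: "d \<in> D \<Longrightarrow> card (vert \<sigma> d \<inter> Md) = 1"
  using matching unfolding perfect_matching_def by auto

lemma vert_subset: "d \<in> D \<Longrightarrow> vert \<sigma> d \<subseteq> D"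
  unfolding vert_def using sigma_in by auto

lemma card_vert:
  assumes "d \<in> D"
  shows "card (vert \<sigma> d) = 3"
proof -
  have "\<sigma> d \<noteq> d" "\<sigma> (\<sigma> d) \<noteq> d" "\<sigma> (\<sigma> d) \<noteq> \<sigma> d"
    using sigma_neq[OF assms] sigma2_neq[OF assms] sigma2_neq_sigma[OF assms] by simp_all
  then show ?thesis unfolding vert_def by simp
qed

lemma vert_eq:
  assumes "d \<in> D" and "y \<in> vert \<sigma> d"
  shows "vert \<sigma> y = vert \<sigma> d"
proof -
  have "\<sigma> (\<sigma> (\<sigma> d)) = d" by (rule sigma3[OF assms(1)])
  moreover from this have "\<sigma> (\<sigma> (\<sigma> (\<sigma> d))) = \<sigma> d" by simp
  ultimately show ?thesis using assms(2) unfolding vert_def by auto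
qed

lemma vert_disjoint:
  assumes "x \<in> D" and "y \<in> D" and "vert \<sigma> x \<noteq> vert \<sigma> y"
  shows "vert \<sigma> x \<inter> vert \<sigma> y = {}"
proof (rule ccontr)
  assume "vert \<sigma> x \<inter> vert \<sigma> y \<noteq> {}"
  then obtain z where "z \<in> vert \<sigma> x" "z \<in> vert \<sigma> y" by blast
  then show False using vert_eq[OF assms(1)] vert_eq[OF assms(2)] assms(3) by metis
qed

lemma dart_conn_vert:
  assumes "x \<in> D" and "y \<in> vert \<sigma> x"
  shows "(x, y) \<in> dart_conn D \<alpha> \<sigma> E"
proof -
  have step: "(x, \<sigma> x) \<in> dart_conn D \<alpha> \<sigma> E" "(\<sigma> x, \<sigma> (\<sigma> x)) \<in> dart_conn D \<alpha> \<sigma> E"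
    using assms(1) sigma_in by (auto intro: dart_conn_sigma)
  have "y = x \<or> y = \<sigma> x \<or> y = \<sigma> (\<sigma> x)" using assms(2) unfolding vert_def by blast
  then show ?thesis using step dart_conn_refl dart_conn_trans[OF step] by auto
qed

lemma matching_dart_unique:
  assumes "d \<in> D" and "m \<in> Md \<inter> vert \<sigma> d" and "m' \<in> Md \<inter> vert \<sigma> d"
  shows "m = m'"
proof -
  obtain z where "vert \<sigma> d \<inter> Md = {z}"
    using card_vert_matching[OF assms(1)] card_1_singletonE by blast
  then show ?thesis using assms(2,3) by (metis Int_iff singletonD)
qed

lemma mdart_eqI:
  assumes "m \<in> Md" and "y \<in> vert \<sigma> m"
  shows "mdart \<sigma> Md y = m"
proof -
  have m: "m \<in> D" using assms(1) matching_subset by blast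
  have my: "m \<in> Md \<inter> vert \<sigma> y" using assms(1) vert_eq[OF m assms(2)] by simp
  have y: "y \<in> D" using assms(2) vert_subset[OF m] by blast
  show ?thesis
    unfolding mdart_def
  proof (rule the_equality)
    show "m \<in> Md \<and> m \<in> vert \<sigma> y" using my by blast
    show "m' = m" if "m' \<in> Md \<and> m' \<in> vert \<sigma> y" for m'
      using matching_dart_unique[OF y _ my] that by blast
  qed
qed

lemma mdart:
  assumes "d \<in> D"
  shows mdart_in: "mdart \<sigma> Md d \<in> Md" and mdart_vert: "d \<in> vert \<sigma> (mdart \<sigma> Md d)"
proof -
  obtain m where m: "m \<in> Md" "m \<in> vert \<sigma> d"
    using card_vert_matching[OF assms] by (metis Int_iff card_1_singletonE singletonI)
  have "d \<in> vert \<sigma> m" using vert_eq[OF assms m(2)] by simp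
  then show "mdart \<sigma> Md d \<in> Md" "d \<in> vert \<sigma> (mdart \<sigma> Md d)"
    using mdart_eqI[OF m(1)] m(1) by simp_all
qed

lemma vert_alpha_disjoint:
  assumes "m \<in> Md"
  shows "vert \<sigma> m \<inter> vert \<sigma> (\<alpha> m) = {}"
proof -
  have m: "m \<in> D" using assms matching_subset by blast
  show ?thesis
  proof (rule vert_disjoint[OF m alpha_in[OF m]], rule notI)
    assume "vert \<sigma> m = vert \<sigma> (\<alpha> m)"
    then have "\<alpha> m \<in> Md \<inter> vert \<sigma> m" using matching_alpha[OF assms] by simp
    then have "\<alpha> m = m" using matching_dart_unique[OF m] assms by simp
    then show False using alpha_neq[OF m] by contradiction
  qed
qed

lemma nonmatching_alpha:
  assumes "x \<in> D - Md"
  shows "\<alpha> x \<in> D - Md"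
proof -
  have "\<alpha> x \<notin> Md" using matching_alpha[of "\<alpha> x"] alpha_alpha[of x] assms by auto
  then show ?thesis using alpha_in[of x] assms by blast
qed

lemma nonmatching_vert:
  assumes "m \<in> Md"
  shows "(D - Md) \<inter> vert \<sigma> m = {\<sigma> m, \<sigma> (\<sigma> m)}"
proof -
  have m: "m \<in> D" using assms matching_subset by blast
  have "\<sigma> m \<notin> Md" "\<sigma> (\<sigma> m) \<notin> Md"
    using matching_dart_unique[OF m, of m] assms sigma_neq[OF m] sigma2_neq[OF m] by force+
  then show ?thesis using assms vert_subset[OF m] unfolding vert_def by auto
qed

lemma card_vert_nonmatching:
  assumes "d \<in> D"
  shows "card (vert \<sigma> d \<inter> (D - Md)) = 2"
proof -
  have "vert \<sigma> d \<inter> (D - Md) = vert \<sigma> d - vert \<sigma> d \<inter> Md"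
    using vert_subset[OF assms] by blast
  moreover have "finite (vert \<sigma> d)" unfolding vert_def by simp
  ultimately show ?thesis
    using card_vert[OF assms] card_vert_matching[OF assms] by (simp add: card_Diff_subset)
qed

lemma even_card_two_per_vertex:
  assumes two: "\<forall>d\<in>D. card (vert \<sigma> d \<inter> X) = 2"
    and A: "A \<subseteq> D" "\<forall>x\<in>A. vert \<sigma> x \<subseteq> A"
  shows "even (card (A \<inter> X))"
proof -
  let ?V = "vert \<sigma> ` A"
  have "A \<inter> X = (\<Union>V\<in>?V. V \<inter> X)"
  proof
    show "A \<inter> X \<subseteq> (\<Union>V\<in>?V. V \<inter> X)" by (auto intro: in_vert(1))
    show "(\<Union>V\<in>?V. V \<inter> X) \<subseteq> A \<inter> X" using A(2) by auto
  qed
  also have "card \<dots> = (\<Sum>V\<in>?V. card (V \<inter> X))"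
  proof (rule card_UN_disjoint)
    show "finite ?V" using finite_subset[OF A(1) finite_darts] by simp
    show "\<forall>V\<in>?V. finite (V \<inter> X)" unfolding vert_def by simp
    show "\<forall>V\<in>?V. \<forall>W\<in>?V. V \<noteq> W \<longrightarrow> V \<inter> X \<inter> (W \<inter> X) = {}"
      using vert_disjoint A(1) by fast
  qed
  also have "\<dots> = (\<Sum>V\<in>?V. 2)"
  proof (rule sum.cong)
    show "card (V \<inter> X) = 2" if "V \<in> ?V" for V using that two A(1) by auto
  qed simp
  finally show ?thesis by simp
qed

definition bridge :: "'d \<Rightarrow> bool" where
  "bridge m \<longleftrightarrow> m \<in> D \<and> (m, \<alpha> m) \<notin> dart_conn D \<alpha> \<sigma> (D - {m, \<alpha> m})"

definition bridge_side :: "'d \<Rightarrow> 'd set" where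
  "bridge_side m = {x \<in> D. (m, x) \<in> dart_conn D \<alpha> \<sigma> (D - {m, \<alpha> m})}"

lemma dart_conn_remove_nonbridge:
  assumes d: "d \<in> D" and conn: "(d, \<alpha> d) \<in> dart_conn D \<alpha> \<sigma> (D - {d, \<alpha> d})"
  shows "dart_conn D \<alpha> \<sigma> D \<subseteq> dart_conn D \<alpha> \<sigma> (D - {d, \<alpha> d})"
proof -
  let ?C = "dart_conn D \<alpha> \<sigma> (D - {d, \<alpha> d})"
  have alpha_step: "(x, \<alpha> x) \<in> ?C" if x: "x \<in> D" for x
  proof -
    consider "x = d" | "x = \<alpha> d" | "x \<in> D - {d, \<alpha> d}" using x by blast
    then show ?thesis
    proof cases
      case 1
      then show ?thesis using conn by simp
    next
      case 2
      then show ?thesis using dart_conn_sym[OF conn] alpha_alpha[OF d] by simp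
    next
      case 3
      then show ?thesis by (rule dart_conn_alpha)
    qed
  qed
  have "{(x, \<sigma> x) | x. x \<in> D} \<union> {(x, \<alpha> x) | x. x \<in> D} \<subseteq> ?C"
    using alpha_step dart_conn_sigma by auto
  then show ?thesis unfolding dart_conn_def[of D \<alpha> \<sigma> D] Let_def by (rule dart_conn_subset)
qed

lemma has_bridge_obtains_bridge:
  assumes "connected_map D \<alpha> \<sigma>" and "has_bridge D \<alpha> \<sigma>"
  obtains m where "bridge m"
proof -
  obtain d x y where "d \<in> D" "x \<in> D" "y \<in> D"
    and "(x, y) \<notin> dart_conn D \<alpha> \<sigma> (D - {d, \<alpha> d})"
    using assms(2) unfolding has_bridge_def by blast
  then have "bridge d"
    using assms(1) dart_conn_remove_nonbridge unfolding connected_map_def bridge_def by blast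
  then show ?thesis by (rule that)
qed

lemma bridge_alpha:
  assumes "bridge m"
  shows "bridge (\<alpha> m)"
proof -
  have m: "m \<in> D" using assms unfolding bridge_def by blast
  have "{\<alpha> m, \<alpha> (\<alpha> m)} = {m, \<alpha> m}" using alpha_alpha[OF m] by auto
  then show ?thesis
    using assms alpha_in[OF m] alpha_alpha[OF m] dart_conn_sym unfolding bridge_def by metis
qed

lemma bridge_side_subset: "bridge_side m \<subseteq> D"
  unfolding bridge_side_def by blast

lemma vert_subset_bridge_side: "x \<in> bridge_side m \<Longrightarrow> vert \<sigma> x \<subseteq> bridge_side m"
  unfolding bridge_side_def
  using dart_conn_vert dart_conn_trans vert_subset by fastforce

lemma bridge_side_self: "bridge m \<Longrightarrow> m \<in> bridge_side m"
  unfolding bridge_def bridge_side_def using dart_conn_refl by auto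

lemma alpha_notin_bridge_side: "bridge m \<Longrightarrow> \<alpha> m \<notin> bridge_side m"
  unfolding bridge_def bridge_side_def by blast

lemma bridge_side_far_end:
  assumes "bridge m" and "x \<in> bridge_side m"
  shows "x \<notin> vert \<sigma> (\<alpha> m)"
proof
  assume "x \<in> vert \<sigma> (\<alpha> m)"
  have "m \<in> D" using assms(1) unfolding bridge_def by blast
  then have "\<alpha> m \<in> vert \<sigma> x" using vert_eq[OF alpha_in \<open>x \<in> vert \<sigma> (\<alpha> m)\<close>] by simp
  then show False
    using alpha_notin_bridge_side[OF assms(1)] vert_subset_bridge_side[OF assms(2)] by blast
qed

lemma bridge_side_alpha:
  assumes "bridge m" and "x \<in> bridge_side m" and "x \<noteq> m"
  shows "\<alpha> x \<in> bridge_side m" and "\<alpha> x \<noteq> m"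
proof -
  have x: "x \<in> D" using assms(2) bridge_side_subset by blast
  have "x \<noteq> \<alpha> m" using alpha_notin_bridge_side[OF assms(1)] assms(2) by blast
  then have "(x, \<alpha> x) \<in> dart_conn D \<alpha> \<sigma> (D - {m, \<alpha> m})"
    using x assms(3) by (intro dart_conn_alpha) blast
  then show "\<alpha> x \<in> bridge_side m"
    using assms(2) alpha_in[OF x] dart_conn_trans unfolding bridge_side_def by auto
  show "\<alpha> x \<noteq> m" using \<open>x \<noteq> \<alpha> m\<close> alpha_alpha[OF x] by metis
qed

lemma odd_card_bridge_side:
  assumes "bridge m" and "Y \<subseteq> bridge_side m" and "m \<in> Y" and "\<forall>x\<in>Y - {m}. \<alpha> x \<in> Y"
  shows "odd (card Y)"
proof (rule odd_card_involution_but_one)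
  show "finite Y" using assms(2) bridge_side_subset finite_darts finite_subset by metis
  show "\<forall>x\<in>Y - {m}. \<alpha> x \<in> Y - {m} \<and> \<alpha> x \<noteq> x \<and> \<alpha> (\<alpha> x) = x"
    using assms bridge_side_alpha bridge_side_subset alpha_neq alpha_alpha by blast
qed (use assms(3) in blast)

lemma bridge_in_matching:
  assumes "bridge m"
  shows "m \<in> Md"
proof (rule ccontr)
  assume m: "m \<notin> Md"
  let ?A = "bridge_side m"
  have fin: "finite ?A" using finite_subset[OF bridge_side_subset finite_darts] .
  have "odd (card ?A)"
    using bridge_side_alpha(1)[OF assms]
    by (intro odd_card_bridge_side[OF assms order_refl bridge_side_self[OF assms]]) blast
  moreover have "even (card (?A \<inter> (D - Md)))"
    using card_vert_nonmatching vert_subset_bridge_side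
    by (intro even_card_two_per_vertex[OF _ bridge_side_subset]) blast+
  moreover have "even (card (?A \<inter> Md))"
  proof (rule even_card_involution)
    show "finite (?A \<inter> Md)" using fin by simp
    show "\<forall>x\<in>?A \<inter> Md. \<alpha> x \<in> ?A \<inter> Md \<and> \<alpha> x \<noteq> x \<and> \<alpha> (\<alpha> x) = x"
    proof
      fix x assume x: "x \<in> ?A \<inter> Md"
      then have "x \<noteq> m" "x \<in> D" using m bridge_side_subset by auto
      then show "\<alpha> x \<in> ?A \<inter> Md \<and> \<alpha> x \<noteq> x \<and> \<alpha> (\<alpha> x) = x"
        using x bridge_side_alpha(1)[OF assms] matching_alpha alpha_neq alpha_alpha by auto
    qed
  qed
  moreover have "card ?A = card (?A \<inter> Md) + card (?A \<inter> (D - Md))"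
  proof -
    have "?A - Md = ?A \<inter> (D - Md)" using bridge_side_subset by auto
    then show ?thesis using card_Int_Diff[OF fin, of Md] by simp
  qed
  ultimately show False by simp
qed

lemma no_two_factor_through_bridge:
  assumes "bridge m" and "F \<subseteq> D" and "\<forall>x\<in>F. \<alpha> x \<in> F" and "Md \<subseteq> F"
    and "\<forall>d\<in>D. card (vert \<sigma> d \<inter> F) = 2"
  shows False
proof -
  have "m \<in> F" using bridge_in_matching[OF assms(1)] assms(4) by blast
  then have "odd (card (bridge_side m \<inter> F))"
    using bridge_side_alpha(1)[OF assms(1)] assms(3) bridge_side_self[OF assms(1)]
    by (intro odd_card_bridge_side[OF assms(1)]) auto
  moreover have "even (card (bridge_side m \<inter> F))"
    using vert_subset_bridge_side by (intro even_card_two_per_vertex[OF assms(5) bridge_side_subset]) blast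
  ultimately show False by simp
qed

abbreviation partner :: "'d set set \<Rightarrow> 'd \<Rightarrow> 'd" where
  "partner S \<equiv> res_partner \<alpha> \<sigma> Md S"

lemma res_partner_at:
  assumes "m \<in> Md"
  shows "partner S (\<sigma> m) = (if {m, \<alpha> m} \<in> S then \<sigma> (\<alpha> m) else \<sigma> (\<sigma> (\<alpha> m)))"
    and "partner S (\<sigma> (\<sigma> m)) = (if {m, \<alpha> m} \<in> S then \<sigma> (\<sigma> (\<alpha> m)) else \<sigma> (\<alpha> m))"
  using mdart_eqI[OF assms] sigma2_neq_sigma[OF subsetD[OF matching_subset assms]]
  unfolding res_partner_def Let_def by simp_all

lemma nonmatching_obtain_matching:
  assumes "x \<in> D - Md"
  obtains m where "m \<in> Md" and "x = \<sigma> m \<or> x = \<sigma> (\<sigma> m)"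
proof -
  let ?m = "mdart \<sigma> Md x"
  have "?m \<in> Md" "x \<in> (D - Md) \<inter> vert \<sigma> ?m" using assms mdart[of x] by auto
  then show ?thesis using that nonmatching_vert by blast
qed

lemma res_partner:
  assumes "x \<in> D - Md"
  shows res_partner_in: "partner S x \<in> (D - Md) \<inter> vert \<sigma> (\<alpha> (mdart \<sigma> Md x))"
    and res_partner_involutive: "partner S (partner S x) = x"
    and res_partner_neq: "partner S x \<noteq> x"
proof -
  obtain m where m: "m \<in> Md" and x: "x = \<sigma> m \<or> x = \<sigma> (\<sigma> m)"
    using nonmatching_obtain_matching[OF assms] .
  have mD: "m \<in> D" using m matching_subset by blast
  have am: "\<alpha> m \<in> Md" using matching_alpha[OF m] .
  have edge: "{\<alpha> m, m} = {m, \<alpha> m}" by (rule insert_commute)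
  note far = res_partner_at[OF am, of S, unfolded alpha_alpha[OF mD] edge]
  show "partner S (partner S x) = x"
    using x res_partner_at[OF m, of S] far sigma2_neq_sigma[OF mD] by auto
  have "partner S x \<in> {\<sigma> (\<alpha> m), \<sigma> (\<sigma> (\<alpha> m))}"
    using x res_partner_at[OF m, of S] by auto
  then have in_far: "partner S x \<in> (D - Md) \<inter> vert \<sigma> (\<alpha> m)"
    by (simp only: nonmatching_vert[OF am])
  moreover have "mdart \<sigma> Md x = m" using x mdart_eqI[OF m] by auto
  ultimately show "partner S x \<in> (D - Md) \<inter> vert \<sigma> (\<alpha> (mdart \<sigma> Md x))" by simp
  show "partner S x \<noteq> x"
  proof
    assume "partner S x = x"
    then have "x \<in> vert \<sigma> m \<inter> vert \<sigma> (\<alpha> m)" using x in_far by auto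
    then show False by (simp only: vert_alpha_disjoint[OF m] empty_iff)
  qed
qed

lemma res_partner_eq_off_edge:
  assumes "x \<in> D - Md - (vert \<sigma> m \<union> vert \<sigma> (\<alpha> m))"
    and "S1 - {{m, \<alpha> m}} = S2 - {{m, \<alpha> m}}"
  shows "partner S1 x = partner S2 x"
proof -
  let ?m = "mdart \<sigma> Md x"
  have "x \<in> vert \<sigma> ?m" using assms(1) mdart_vert by blast
  then have "?m \<noteq> m" "?m \<noteq> \<alpha> m" using assms(1) by auto
  then have "{?m, \<alpha> ?m} \<noteq> {m, \<alpha> m}" by (metis insertI1 insertE singletonD)
  then have "({?m, \<alpha> ?m} \<in> S1) = ({?m, \<alpha> ?m} \<in> S2)" using assms(2) by blast
  then show ?thesis unfolding res_partner_def Let_def by simp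
qed

definition arcs :: "'d set \<Rightarrow> 'd set set \<Rightarrow> ('d \<times> 'd) set" where
  "arcs Q S = {(x, \<alpha> x) | x. x \<in> D - Md} \<union> {(x, partner S x) | x. x \<in> D - Md - Q}"

definition same_curve :: "'d set \<Rightarrow> 'd set set \<Rightarrow> ('d \<times> 'd) set" where
  "same_curve Q S = (arcs Q S \<union> (arcs Q S)\<inverse>)\<^sup>*"

lemma num_curves_eq: "num_curves D \<alpha> \<sigma> Md S = card ((D - Md) // same_curve {} S)"
  unfolding num_curves_def same_curve_def arcs_def Let_def by simp

lemma same_curve_mono: "same_curve Q S \<subseteq> same_curve {} S"
  unfolding same_curve_def arcs_def by (rule rtrancl_mono) blast

lemma same_curve_cut_edge_in_dart_conn:
  assumes m: "m \<in> Md"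
  shows "same_curve (vert \<sigma> m \<union> vert \<sigma> (\<alpha> m)) S \<subseteq> dart_conn D \<alpha> \<sigma> (D - {m, \<alpha> m})"
    (is "same_curve ?Q S \<subseteq> ?C")
proof -
  have alpha_arc: "(x, \<alpha> x) \<in> ?C" if "x \<in> D - Md" for x
    using that m matching_alpha[OF m] by (intro dart_conn_alpha) auto
  have partner_arc: "(x, partner S x) \<in> ?C" if x: "x \<in> D - Md - ?Q" for x
  proof -
    let ?m = "mdart \<sigma> Md x"
    have "?m \<in> D" using x mdart_in matching_subset by blast
    moreover have "x \<in> vert \<sigma> ?m" using x mdart_vert by blast
    ultimately have "?m \<noteq> m" "?m \<noteq> \<alpha> m" "(?m, x) \<in> ?C" using x dart_conn_vert by auto
    then have "(x, ?m) \<in> ?C" "(?m, \<alpha> ?m) \<in> ?C"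
      using \<open>?m \<in> D\<close> dart_conn_sym by (auto intro: dart_conn_alpha)
    moreover have "(\<alpha> ?m, partner S x) \<in> ?C"
      using res_partner_in[of x S] x alpha_in[OF \<open>?m \<in> D\<close>] by (intro dart_conn_vert) auto
    ultimately show ?thesis by (meson dart_conn_trans)
  qed
  have "arcs ?Q S \<subseteq> ?C" unfolding arcs_def using alpha_arc partner_arc by auto
  then show ?thesis unfolding same_curve_def by (rule dart_conn_subset)
qed

lemma arc_in_same_curve: "p \<in> arcs Q S \<Longrightarrow> p \<in> same_curve Q S"
  unfolding same_curve_def by (rule r_into_rtrancl) (rule UnI1)

lemma same_curve_refl: "(x, x) \<in> same_curve Q S"
  unfolding same_curve_def by simp

lemma same_curve_sym: "(x, y) \<in> same_curve Q S \<Longrightarrow> (y, x) \<in> same_curve Q S"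
  unfolding same_curve_def by (rule sym_closure_sym)

lemma same_curve_trans:
  "(x, y) \<in> same_curve Q S \<Longrightarrow> (y, z) \<in> same_curve Q S \<Longrightarrow> (x, z) \<in> same_curve Q S"
  unfolding same_curve_def by (rule rtrancl_trans)

lemma same_curve_step:
  "(x, y) \<in> same_curve Q S \<Longrightarrow> (y, z) \<in> arcs Q S \<Longrightarrow> (x, z) \<in> same_curve Q S"
  unfolding same_curve_def by (erule rtrancl_into_rtrancl) (erule UnI1)

lemma bridge_end_darts_same_curve:
  assumes "bridge m"
  shows "(\<sigma> m, \<sigma> (\<sigma> m)) \<in> same_curve (vert \<sigma> m \<union> vert \<sigma> (\<alpha> m)) S"
    (is "_ \<in> same_curve ?Q S")
proof (rule ccontr)
  assume apart: "(\<sigma> m, \<sigma> (\<sigma> m)) \<notin> same_curve ?Q S"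
  have m: "m \<in> Md" using bridge_in_matching[OF assms] .
  have mD: "m \<in> D" using m matching_subset by blast
  have near: "(D - Md) \<inter> vert \<sigma> m = {\<sigma> m, \<sigma> (\<sigma> m)}" by (rule nonmatching_vert[OF m])
  define C where "C = {y \<in> D - Md. (\<sigma> m, y) \<in> same_curve ?Q S}"
  have "\<sigma> m \<in> (D - Md) \<inter> vert \<sigma> m" unfolding near by simp
  then have sm: "\<sigma> m \<in> C" unfolding C_def same_curve_def by simp
  have fin: "finite C" unfolding C_def using finite_darts by simp
  have arc_closed: "y \<in> C" if "x \<in> C" "(x, y) \<in> arcs ?Q S" "y \<in> D - Md" for x y
    using that same_curve_step[of "\<sigma> m" x ?Q S y] unfolding C_def by simp
  have in_side: "x \<in> bridge_side m" if "x \<in> C" for x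
  proof -
    have "(\<sigma> m, x) \<in> dart_conn D \<alpha> \<sigma> (D - {m, \<alpha> m})"
      using that subsetD[OF same_curve_cut_edge_in_dart_conn[OF m, of S]] unfolding C_def by simp
    then show ?thesis
      using that dart_conn_trans[OF dart_conn_sigma[OF mD]] unfolding C_def bridge_side_def by simp
  qed
  have off_Q: "x \<notin> ?Q" if x: "x \<in> C - {\<sigma> m}" for x
  proof
    assume "x \<in> ?Q"
    moreover have "x \<notin> vert \<sigma> (\<alpha> m)" using bridge_side_far_end[OF assms in_side] x by blast
    ultimately have "x \<in> (D - Md) \<inter> vert \<sigma> m" using x unfolding C_def by blast
    then have "x = \<sigma> (\<sigma> m)" using x unfolding near by blast
    then show False using x apart unfolding C_def by simp
  qed
  have "even (card C)"
  proof (rule even_card_involution[OF fin], intro ballI conjI)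
    fix x assume x: "x \<in> C"
    then have "x \<in> D - Md" unfolding C_def by simp
    then show "\<alpha> x \<in> C"
      using arc_closed[OF x] nonmatching_alpha unfolding arcs_def by simp
    show "\<alpha> x \<noteq> x" "\<alpha> (\<alpha> x) = x" using alpha_neq alpha_alpha \<open>x \<in> D - Md\<close> by simp_all
  qed
  moreover have "odd (card C)"
  proof (rule odd_card_involution_but_one[OF fin sm], intro ballI conjI)
    fix x assume x: "x \<in> C - {\<sigma> m}"
    then have N: "x \<in> D - Md" unfolding C_def by simp
    have "(x, partner S x) \<in> arcs ?Q S" unfolding arcs_def using N off_Q[OF x] by auto
    then have "partner S x \<in> C"
      using arc_closed[of x "partner S x"] x res_partner_in[OF N, of S] by simp
    moreover have "partner S x \<noteq> \<sigma> m"
    proof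
      assume "partner S x = \<sigma> m"
      then have "x = partner S (\<sigma> m)" using res_partner_involutive[OF N, of S] by simp
      also have "\<dots> \<in> vert \<sigma> (\<alpha> m)"
        using res_partner_in[of "\<sigma> m" S] \<open>\<sigma> m \<in> C\<close> mdart_eqI[OF m] unfolding C_def by simp
      finally show False using off_Q[OF x] by simp
    qed
    ultimately show "partner S x \<in> C - {\<sigma> m}" by simp
    show "partner S x \<noteq> x" "partner S (partner S x) = x"
      using res_partner_neq[OF N] res_partner_involutive[OF N] by simp_all
  qed
  ultimately show False by simp
qed

lemma bridge_darts_same_curve:
  assumes "bridge m"
    and "x \<in> (D - Md) \<inter> (vert \<sigma> m \<union> vert \<sigma> (\<alpha> m))"
    and "y \<in> (D - Md) \<inter> (vert \<sigma> m \<union> vert \<sigma> (\<alpha> m))"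
  shows "(x, y) \<in> same_curve {} S"
proof -
  have m: "m \<in> Md" using bridge_in_matching[OF assms(1)] .
  have am: "\<alpha> m \<in> Md" using matching_alpha[OF m] .
  have mD: "m \<in> D" using m matching_subset by blast
  have Q: "vert \<sigma> (\<alpha> m) \<union> vert \<sigma> (\<alpha> (\<alpha> m)) = vert \<sigma> m \<union> vert \<sigma> (\<alpha> m)"
    using alpha_alpha[OF mD] by auto
  have near: "(\<sigma> m, \<sigma> (\<sigma> m)) \<in> same_curve {} S"
    by (rule subsetD[OF same_curve_mono bridge_end_darts_same_curve[OF assms(1)]])
  have far: "(\<sigma> (\<alpha> m), \<sigma> (\<sigma> (\<alpha> m))) \<in> same_curve {} S"
    by (rule subsetD[OF same_curve_mono bridge_end_darts_same_curve[OF bridge_alpha[OF assms(1)], unfolded Q]])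
  have "\<sigma> m \<in> D - Md" using nonmatching_vert[OF m] by auto
  then have arc: "(\<sigma> m, partner S (\<sigma> m)) \<in> same_curve {} S"
    by (intro arc_in_same_curve) (auto simp: arcs_def)
  have across: "(\<sigma> m, \<sigma> (\<alpha> m)) \<in> same_curve {} S"
  proof (cases "{m, \<alpha> m} \<in> S")
    case True
    then show ?thesis using arc res_partner_at(1)[OF m, of S] by simp
  next
    case False
    then have "(\<sigma> m, \<sigma> (\<sigma> (\<alpha> m))) \<in> same_curve {} S"
      using arc res_partner_at(1)[OF m, of S] by simp
    then show ?thesis using same_curve_trans same_curve_sym[OF far] by blast
  qed
  have to_x: "(\<sigma> m, z) \<in> same_curve {} S"
    if "z \<in> (D - Md) \<inter> (vert \<sigma> m \<union> vert \<sigma> (\<alpha> m))" for z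
  proof -
    have "z \<in> {\<sigma> m, \<sigma> (\<sigma> m), \<sigma> (\<alpha> m), \<sigma> (\<sigma> (\<alpha> m))}"
      using that nonmatching_vert[OF m] nonmatching_vert[OF am] by blast
    then show ?thesis
      using same_curve_refl[of "\<sigma> m"] near across same_curve_trans[OF across far] by auto
  qed
  show ?thesis using same_curve_trans[OF same_curve_sym[OF to_x[OF assms(2)]] to_x[OF assms(3)]] .
qed

lemma same_curve_indep_bridge_state:
  assumes "bridge m" and S: "S1 - {{m, \<alpha> m}} = S2 - {{m, \<alpha> m}}"
  shows "same_curve {} S1 \<subseteq> same_curve {} S2"
proof -
  let ?Q = "vert \<sigma> m \<union> vert \<sigma> (\<alpha> m)"
  have m: "m \<in> Md" using bridge_in_matching[OF assms(1)] .
  have mD: "m \<in> D" using m matching_subset by blast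
  have partner_arc: "(x, partner S1 x) \<in> same_curve {} S2" if x: "x \<in> D - Md" for x
  proof (cases "x \<in> ?Q")
    case True
    then have "mdart \<sigma> Md x \<in> {m, \<alpha> m}"
      using mdart_eqI[OF m] mdart_eqI[OF matching_alpha[OF m]] by auto
    then have "partner S1 x \<in> (D - Md) \<inter> ?Q"
      using res_partner_in[OF x, of S1] alpha_alpha[OF mD] by auto
    moreover have "x \<in> (D - Md) \<inter> ?Q" using x True by simp
    ultimately show ?thesis by (intro bridge_darts_same_curve[OF assms(1)])
  next
    case False
    then have "partner S1 x = partner S2 x" using res_partner_eq_off_edge[OF _ S] x by simp
    then show ?thesis using x by (intro arc_in_same_curve) (auto simp: arcs_def)
  qed
  have "arcs {} S1 \<subseteq> same_curve {} S2"
  proof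
    fix p assume "p \<in> arcs {} S1"
    then obtain x where x: "x \<in> D - Md" and p: "p = (x, \<alpha> x) \<or> p = (x, partner S1 x)"
      unfolding arcs_def by auto
    have "(x, \<alpha> x) \<in> same_curve {} S2" using x by (intro arc_in_same_curve) (auto simp: arcs_def)
    then show "p \<in> same_curve {} S2" using p partner_arc[OF x] by auto
  qed
  then show ?thesis unfolding same_curve_def by (rule sym_closure_subset)
qed

lemma num_curves_flip_bridge:
  assumes "bridge m"
  shows "num_curves D \<alpha> \<sigma> Md (insert {m, \<alpha> m} S) = num_curves D \<alpha> \<sigma> Md S"
proof -
  have "insert {m, \<alpha> m} S - {{m, \<alpha> m}} = S - {{m, \<alpha> m}}" by simp
  then have "same_curve {} (insert {m, \<alpha> m} S) = same_curve {} S"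
    using same_curve_indep_bridge_state[OF assms] by (intro subset_antisym) simp_all
  then show ?thesis unfolding num_curves_eq by simp
qed

lemma finite_match_edges: "finite (match_edges \<alpha> Md)"
proof -
  have "match_edges \<alpha> Md = (\<lambda>d. {d, \<alpha> d}) ` Md" unfolding match_edges_def by blast
  then show ?thesis using finite_subset[OF matching_subset finite_darts] by simp
qed

end

theorem lemma2p6:
  fixes D :: "'d set" and \<alpha> \<sigma> :: "'d \<Rightarrow> 'd" and Md :: "'d set"
  assumes "trivalent_map D \<alpha> \<sigma>"
    and "connected_map D \<alpha> \<sigma>"
    and "planar_map D \<alpha> \<sigma>"
    and "perfect_matching D \<alpha> \<sigma> Md"
    and "has_bridge D \<alpha> \<sigma>"
  shows "two_factor_poly D \<alpha> \<sigma> Md 1 = 0 \<and> two_factor_count D \<alpha> \<sigma> Md = 0"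
proof -
  interpret trivalent_matching D \<alpha> \<sigma> Md using assms(1,4) by unfold_locales
  obtain m where m: "bridge m" using has_bridge_obtains_bridge[OF assms(2,5)] .
  let ?e = "{m, \<alpha> m}"
  have e: "?e \<in> match_edges \<alpha> Md" using bridge_in_matching[OF m] unfolding match_edges_def by blast
  have "two_factor_poly D \<alpha> \<sigma> Md 1 = 0"
    unfolding two_factor_poly_def
  proof (rule sum_Pow_eq_0_if_flip_negates[OF finite_match_edges e])
    fix S assume S: "S \<subseteq> match_edges \<alpha> Md - {?e}"
    have "card (insert ?e S) = Suc (card S)"
      using S finite_subset[OF subset_trans[OF S Diff_subset] finite_match_edges]
      by (intro card_insert_disjoint) auto
    then show "(- 1) ^ card (insert ?e S) * (1 + 1 / 1) ^ num_curves D \<alpha> \<sigma> Md (insert ?e S)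
        = - ((- 1) ^ card S * (1 + 1 / 1) ^ num_curves D \<alpha> \<sigma> Md S :: real)"
      using num_curves_flip_bridge[OF m] by simp
  qed
  moreover have "{F. F \<subseteq> D \<and> (\<forall>x\<in>F. \<alpha> x \<in> F) \<and> Md \<subseteq> F \<and>
      (\<forall>d\<in>D. card (vert \<sigma> d \<inter> F) = 2)} = {}"
    using no_two_factor_through_bridge[OF m] by blast
  ultimately show ?thesis unfolding two_factor_count_def by (simp only: card.empty simp_thms)
qed

end
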